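(* Let $R$ be an associative ring. Then $R$ is both left locally unital and right locally unital if and only if for every $n\in\mathbb{N}$ and all $r_1,\ldots,r_n \in R$ there is an idempotent $e \in R$ with $e r_i = r_i e = r_i$ for all $i \in\{1,\ldots,n\}$.
   Context: Rings are associative, not necessarily unital. $R$ is called left (right) locally unital if for every $n \in \mathbb{N}$ and all $r_1,\ldots,r_n\in R$ there is an idempotent $e\in R$ (i.e. $e^2=e$) such that $e r_i = r_i$ (respectively $r_i e = r_i$) for all $i\in\{1,\ldots,n\}$. *)

theory Defs
  imports Main
begin

(* Rings are associative, not necessarily unital: type class ring (no 1). *)

definition idempotent :: "'a::ring \<Rightarrow> bool" where
  "idempotent e \<longleftrightarrow> e * e = e"

definition left_locally_unital :: "'a::ring itself \<Rightarrow> bool" where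
  "left_locally_unital _ \<longleftrightarrow>
     (\<forall>rs :: 'a list. \<exists>e. idempotent e \<and> (\<forall>r\<in>set rs. e * r = r))"

definition right_locally_unital :: "'a::ring itself \<Rightarrow> bool" where
  "right_locally_unital _ \<longleftrightarrow>
     (\<forall>rs :: 'a list. \<exists>e. idempotent e \<and> (\<forall>r\<in>set rs. r * e = r))"

end

theory Submission
  imports Defs
begin

text \<open>Given a left unit e for r1, ..., rn, take a right unit f for e, r1, ..., rn. Then
  g = e + f - f e is again idempotent, g r = r whenever e r = r, and r g = r whenever
  r f = r; so g is a two-sided unit for all ri.\<close>

lemma left_unit_of_join:
  fixes e f r :: "'a::ring"
  assumes "e * r = r"
  shows "(e + f - f * e) * r = r"
proof -
  have "(e + f - f * e) * r = e * r + f * r - f * (e * r)"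
    by (simp add: algebra_simps mult.assoc)
  with assms show ?thesis by simp
qed

lemma right_unit_of_join:
  fixes e f r :: "'a::ring"
  assumes "r * f = r"
  shows "r * (e + f - f * e) = r"
proof -
  have "r * (e + f - f * e) = r * e + r * f - (r * f) * e"
    by (simp add: algebra_simps mult.assoc)
  with assms show ?thesis by simp
qed

lemma idempotent_join:
  fixes e f :: "'a::ring"
  assumes e: "idempotent e" and f: "idempotent f" and ef: "e * f = e"
  shows "idempotent (e + f - f * e)"
proof -
  define g where "g = e + f - f * e"
  have ge: "g * e = e"
    unfolding g_def using e by (intro left_unit_of_join) (simp add: idempotent_def)
  have gf: "g * f = g"
    unfolding g_def using f ef
    by (simp add: idempotent_def algebra_simps mult.assoc[symmetric])
  have "g * g = g * e + g * f - (g * f) * e"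
    unfolding g_def by (simp add: algebra_simps mult.assoc)
  also have "\<dots> = g" using ge gf by simp
  finally show ?thesis unfolding g_def idempotent_def .
qed

theorem mainTheorem7:
  shows "(left_locally_unital TYPE('a::ring) \<and> right_locally_unital TYPE('a)) \<longleftrightarrow>
    (\<forall>rs :: 'a list. \<exists>e. idempotent e \<and> (\<forall>r\<in>set rs. e * r = r \<and> r * e = r))"
proof
  assume units: "left_locally_unital TYPE('a::ring) \<and> right_locally_unital TYPE('a)"
  show "\<forall>rs :: 'a list. \<exists>e. idempotent e \<and> (\<forall>r\<in>set rs. e * r = r \<and> r * e = r)"
  proof
    fix rs :: "'a list"
    obtain e :: 'a where e: "idempotent e" "\<forall>r\<in>set rs. e * r = r"
      using units unfolding left_locally_unital_def by blast
    obtain f :: 'a where f: "idempotent f" "\<forall>r\<in>set (e # rs). r * f = r"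
      using units unfolding right_locally_unital_def by blast
    have "idempotent (e + f - f * e)"
      using f by (intro idempotent_join e(1)) simp_all
    moreover have "\<forall>r\<in>set rs. (e + f - f * e) * r = r \<and> r * (e + f - f * e) = r"
      using e(2) f(2) by (simp add: left_unit_of_join right_unit_of_join)
    ultimately show "\<exists>g. idempotent g \<and> (\<forall>r\<in>set rs. g * r = r \<and> r * g = r)"
      by blast
  qed
next
  assume "\<forall>rs :: 'a list. \<exists>e. idempotent e \<and> (\<forall>r\<in>set rs. e * r = r \<and> r * e = r)"
  then show "left_locally_unital TYPE('a::ring) \<and> right_locally_unital TYPE('a)"
    unfolding left_locally_unital_def right_locally_unital_def by meson
qed

end
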